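(* Let $J\subseteq S$, and define the relation $\Theta$ on $\mathfrak{S}_n^J$ by $(w,w')\in\Theta$ if and only if $\Pi_\downarrow^J(w)=\Pi_\downarrow^J(w')$. Then $\Theta$ is a lattice congruence on the lattice $\mathrm{Weak}(\mathfrak{S}_n^J)=[e,w_\circ^J]$, and the corresponding quotient lattice is (isomorphic to) $\mathcal{T}_n^J$, the set $\mathfrak{S}_n^J(231)$ ordered by $\le_S$.
   Context: $\mathfrak{S}_n$ is the symmetric group on $[n]$, $s_i=(i,i+1)$, $S=\{s_1,\dots,s_{n-1}\}$, one-line notation $w=w_1\cdots w_n$, $\mathrm{inv}(w)=\{(i,j):i<j,\ w_i>w_j\}$, weak order $u\le_S v\iff\mathrm{inv}(u)\subseteq\mathrm{inv}(v)$. For $J\subseteq S$, $\mathfrak{S}_n^J$ is the set of $w$ with $w_i<w_{i+1}$ whenever $s_i\in J$; with the restricted order it is the weak order interval $[e,w_\circ^J]$, where $w_\circ^J$ is the longest element of $\mathfrak{S}_n^J$, and in particular a lattice. Writing $J=S\setminus\{s_{j_1},\dots,s_{j_r}\}$ with $j_1<\dots<j_r$, the $J$-regions are $\{1,\dots,j_1\},\{j_1+1,\dots,j_2\},\dots,\{j_r+1,\dots,n\}$. $\mathfrak{S}_n^J(231)$ is the set of $w\in\mathfrak{S}_n^J$ admitting no indices $i<j<k$ in pairwise different $J$-regions with $w_k<w_i<w_j$ and $w_i=w_k+1$. For $w\in\mathfrak{S}_n^J$, $\Pi_\downarrow^J(w)$ is the unique greatest element of $\mathfrak{S}_n^J(231)$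 that is $\le_S w$ (it exists). A lattice congruence on a lattice $L$ is an equivalence relation $\Theta$ such that $x\,\Theta\,y$ implies $(x\wedge z)\,\Theta\,(y\wedge z)$ and $(x\vee z)\,\Theta\,(y\vee z)$ for all $z\in L$; $L/\Theta$ is the lattice of classes with induced operations. *)

theory Defs
  imports "HOL-Combinatorics.Permutations"
begin

text \<open>Permutations of [n] are functions nat => nat permuting {1..n} (identity elsewhere);
  w i is the i-th letter of the one-line notation. The simple reflection s_i is encoded
  by the index i, so J is a subset of {1..<n}.\<close>

definition Sym :: "nat \<Rightarrow> (nat \<Rightarrow> nat) set" where
  "Sym n = {w. w permutes {1..n}}"

definition inv_set :: "nat \<Rightarrow> (nat \<Rightarrow> nat) \<Rightarrow> (nat \<times> nat) set" where
  "inv_set n w = {(i,j). 1 \<le> i \<and> i < j \<and> j \<le> n \<and> w i > w j}"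

definition weak_le :: "nat \<Rightarrow> (nat \<Rightarrow> nat) \<Rightarrow> (nat \<Rightarrow> nat) \<Rightarrow> bool" where
  "weak_le n u v \<longleftrightarrow> inv_set n u \<subseteq> inv_set n v"

definition SymJ :: "nat \<Rightarrow> nat set \<Rightarrow> (nat \<Rightarrow> nat) set" where
  "SymJ n J = {w \<in> Sym n. \<forall>i\<in>J. w i < w (Suc i)}"

definition same_region :: "nat set \<Rightarrow> nat \<Rightarrow> nat \<Rightarrow> bool" where
  "same_region J i k \<longleftrightarrow> (\<forall>m. min i k \<le> m \<and> m < max i k \<longrightarrow> m \<in> J)"

definition avoids231 :: "nat \<Rightarrow> nat set \<Rightarrow> (nat \<Rightarrow> nat) \<Rightarrow> bool" where
  "avoids231 n J w \<longleftrightarrow> \<not> (\<exists>i j k. 1 \<le> i \<and> i < j \<and> j < k \<and> k \<le> n \<and>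
      \<not> same_region J i j \<and> \<not> same_region J j k \<and> \<not> same_region J i k \<and>
      w k < w i \<and> w i < w j \<and> w i = w k + 1)"

definition SymJ231 :: "nat \<Rightarrow> nat set \<Rightarrow> (nat \<Rightarrow> nat) set" where
  "SymJ231 n J = {w \<in> SymJ n J. avoids231 n J w}"

definition Pi_down :: "nat \<Rightarrow> nat set \<Rightarrow> (nat \<Rightarrow> nat) \<Rightarrow> (nat \<Rightarrow> nat)" where
  "Pi_down n J w = (THE u. u \<in> SymJ231 n J \<and> weak_le n u w \<and>
      (\<forall>v\<in>SymJ231 n J. weak_le n v w \<longrightarrow> weak_le n v u))"

definition Theta :: "nat \<Rightarrow> nat set \<Rightarrow> ((nat \<Rightarrow> nat) \<times> (nat \<Rightarrow> nat)) set" where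
  "Theta n J = {(w,w'). w \<in> SymJ n J \<and> w' \<in> SymJ n J \<and> Pi_down n J w = Pi_down n J w'}"

definition is_meet :: "'a set \<Rightarrow> ('a \<Rightarrow> 'a \<Rightarrow> bool) \<Rightarrow> 'a \<Rightarrow> 'a \<Rightarrow> 'a \<Rightarrow> bool" where
  "is_meet A le x y m \<longleftrightarrow> m \<in> A \<and> le m x \<and> le m y \<and> (\<forall>z\<in>A. le z x \<and> le z y \<longrightarrow> le z m)"

definition is_join :: "'a set \<Rightarrow> ('a \<Rightarrow> 'a \<Rightarrow> bool) \<Rightarrow> 'a \<Rightarrow> 'a \<Rightarrow> 'a \<Rightarrow> bool" where
  "is_join A le x y m \<longleftrightarrow> m \<in> A \<and> le x m \<and> le y m \<and> (\<forall>z\<in>A. le x z \<and> le y z \<longrightarrow> le m z)"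

definition is_lattice :: "'a set \<Rightarrow> ('a \<Rightarrow> 'a \<Rightarrow> bool) \<Rightarrow> bool" where
  "is_lattice A le \<longleftrightarrow>
     (\<forall>x\<in>A. le x x) \<and> (\<forall>x\<in>A. \<forall>y\<in>A. le x y \<and> le y x \<longrightarrow> x = y) \<and>
     (\<forall>x\<in>A. \<forall>y\<in>A. \<forall>z\<in>A. le x y \<and> le y z \<longrightarrow> le x z) \<and>
     (\<forall>x\<in>A. \<forall>y\<in>A. (\<exists>m. is_meet A le x y m) \<and> (\<exists>m. is_join A le x y m))"

definition lattice_congruence :: "'a set \<Rightarrow> ('a \<Rightarrow> 'a \<Rightarrow> bool) \<Rightarrow> ('a \<times> 'a) set \<Rightarrow> bool" where
  "lattice_congruence A le R \<longleftrightarrow> equiv A R \<and>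
     (\<forall>x y z m m'. (x,y) \<in> R \<and> z \<in> A \<and> is_meet A le x z m \<and> is_meet A le y z m' \<longrightarrow> (m,m') \<in> R) \<and>
     (\<forall>x y z m m'. (x,y) \<in> R \<and> z \<in> A \<and> is_join A le x z m \<and> is_join A le y z m' \<longrightarrow> (m,m') \<in> R)"

text \<open>Order of the quotient lattice A/R with induced operations: C \<le> D iff C \<and> D = C,
  i.e. the meet of representatives lies in C.\<close>
definition quot_le :: "'a set \<Rightarrow> ('a \<Rightarrow> 'a \<Rightarrow> bool) \<Rightarrow> 'a set \<Rightarrow> 'a set \<Rightarrow> bool" where
  "quot_le A le C D \<longleftrightarrow> (\<exists>x\<in>C. \<exists>y\<in>D. \<exists>m. is_meet A le x y m \<and> m \<in> C)"

end

theory Submission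
  imports Defs
begin

text \<open>
  A set of pairs i < k in {1..n} is the inversion set of a permutation iff it is transitive and
  co-transitive ((i,k) inverted and i < j < k force (i,j) or (j,k) inverted), and then the
  permutation is unique. Hence in the weak order on \<open>SymJ n J\<close> the join of a family is realized by
  the transitive closure of the union of their inversion sets, and a meet is the join of all common
  lower bounds.

  Call (i,m), with m outside the J-region of i, a prefix inversion of w if i is inverted with every
  position q in (i,m] lying outside the J-region of i. The transitive closure of the prefix inversions of w is the inversion set of
  \<open>Pi_down w\<close>, because a permutation avoids the parabolic 231 pattern exactly when its inversion set
  is generated by its prefix inversions. Hence \<open>Theta\<close>-classes are the fibres of w \<mapsto> prefix
  inversions of w. Compatibility with meets holds for the kernel of any projection onto greatest lower
  elements; compatibility with joins holds because the prefix inversions of the join of x and z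
  are determined by those of x and z. The quotient is then isomorphic to the image of the projection.
\<close>

definition kernel_on :: "'a set \<Rightarrow> ('a \<Rightarrow> 'b) \<Rightarrow> ('a \<times> 'a) set" where
  "kernel_on A f = {(x,y). x \<in> A \<and> y \<in> A \<and> f x = f y}"

lemma equiv_kernel_on: "equiv A (kernel_on A f)"
  by (rule equivI) (auto simp: kernel_on_def refl_on_def sym_def trans_def)

lemma kernel_on_Image: "kernel_on A f `` {x} = (if x \<in> A then {y \<in> A. f y = f x} else {})"
  by (auto simp: kernel_on_def)

locale down_projection =
  fixes A :: "'a set" and le :: "'a \<Rightarrow> 'a \<Rightarrow> bool" and B :: "'a set" and p :: "'a \<Rightarrow> 'a"
  assumes le_refl: "x \<in> A \<Longrightarrow> le x x"
    and le_antisym: "x \<in> A \<Longrightarrow> y \<in> A \<Longrightarrow> le x y \<Longrightarrow> le y x \<Longrightarrow> x = y"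
    and le_trans: "x \<in> A \<Longrightarrow> y \<in> A \<Longrightarrow> z \<in> A \<Longrightarrow> le x y \<Longrightarrow> le y z \<Longrightarrow> le x z"
    and B_subset: "B \<subseteq> A"
    and p_in: "w \<in> A \<Longrightarrow> p w \<in> B"
    and p_le: "w \<in> A \<Longrightarrow> le (p w) w"
    and p_greatest: "w \<in> A \<Longrightarrow> b \<in> B \<Longrightarrow> le b w \<Longrightarrow> le b (p w)"
begin

lemma p_in_A: "w \<in> A \<Longrightarrow> p w \<in> A"
  using p_in B_subset by blast

lemma p_fixes:
  assumes "b \<in> B"
  shows "p b = b"
proof -
  have b: "b \<in> A"
    using assms B_subset by blast
  show ?thesis
    using le_antisym[OF p_in_A[OF b] b p_le[OF b] p_greatest[OF b assms le_refl[OF b]]] .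
qed

lemma p_mono:
  assumes "x \<in> A" "y \<in> A" "le x y"
  shows "le (p x) (p y)"
  using p_greatest[OF assms(2) p_in[OF assms(1)] le_trans[OF p_in_A[OF assms(1)] assms(1,2) p_le[OF assms(1)] assms(3)]] .

lemma p_meet_le:
  assumes "p x = p y" and m: "is_meet A le x z m" and m': "is_meet A le y z m'"
    and x: "x \<in> A" and y: "y \<in> A" and z: "z \<in> A"
  shows "le (p m) (p m')"
proof -
  have mA: "m \<in> A" "m' \<in> A" and mx: "le m x" and mz: "le m z"
    using m m' by (auto simp: is_meet_def)
  have pm: "p m \<in> A" "le (p m) m"
    using p_in_A p_le mA by auto
  have "le (p m) (p y)"
    using p_mono[OF mA(1) x mx] \<open>p x = p y\<close> by simp
  then have "le (p m) y"
    using le_trans[OF pm(1) p_in_A[OF y] y _ p_le[OF y]] by blast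
  moreover have "le (p m) z"
    using le_trans[OF pm(1) mA(1) z pm(2) mz] .
  ultimately have "le (p m) m'"
    using m' pm(1) unfolding is_meet_def by blast
  then show ?thesis
    using p_greatest[OF mA(2) p_in[OF mA(1)]] by blast
qed

lemma kernel_meet_compatible:
  assumes "(x,y) \<in> kernel_on A p" "z \<in> A" "is_meet A le x z m" "is_meet A le y z m'"
  shows "(m,m') \<in> kernel_on A p"
proof -
  have "x \<in> A" "y \<in> A" "p x = p y"
    using assms(1) by (auto simp: kernel_on_def)
  moreover have "m \<in> A" "m' \<in> A"
    using assms(3,4) by (auto simp: is_meet_def)
  ultimately show ?thesis
    using p_meet_le[of x y z m m'] p_meet_le[of y x z m' m] assms(2-4) le_antisym p_in_A
    by (auto simp: kernel_on_def)
qed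

lemma kernel_class_cases:
  assumes "C \<in> A // kernel_on A p"
  obtains c where "c \<in> A" "C = {y \<in> A. p y = p c}"
  using assms by (auto elim!: quotientE simp: kernel_on_Image)

lemma quotient_iso:
  "\<exists>f. bij_betw f (A // kernel_on A p) B \<and>
     (\<forall>C\<in>A // kernel_on A p. \<forall>D\<in>A // kernel_on A p. quot_le A le C D \<longleftrightarrow> le (f C) (f D))"
proof -
  let ?R = "kernel_on A p"
  define f where "f C = p (SOME x. x \<in> C)" for C
  have f_class: "f {y \<in> A. p y = p c} = p c" if "c \<in> A" for c
  proof -
    have "(SOME x. x \<in> {y \<in> A. p y = p c}) \<in> {y \<in> A. p y = p c}"
      unfolding some_in_eq using that by blast
    then show ?thesis
      by (simp add: f_def)
  qed
  have class_in: "{y \<in> A. p y = p c} \<in> A // ?R" if "c \<in> A" for c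
    using quotientI[OF that, of ?R] that by (simp add: kernel_on_Image)
  have p_in_class: "p c \<in> {y \<in> A. p y = p c}" if "c \<in> A" for c
    using that p_in_A p_fixes p_in by simp
  have "inj_on f (A // ?R)"
  proof (rule inj_onI)
    fix C D assume "C \<in> A // ?R" "D \<in> A // ?R" "f C = f D"
    then show "C = D"
      by (elim kernel_class_cases) (simp add: f_class)
  qed
  moreover have "f ` (A // ?R) = B"
  proof
    show "f ` (A // ?R) \<subseteq> B"
      by (auto elim!: kernel_class_cases simp: f_class p_in)
    show "B \<subseteq> f ` (A // ?R)"
    proof
      fix b assume b: "b \<in> B"
      then have "b \<in> A"
        using B_subset by blast
      then have "f {y \<in> A. p y = p b} = b" "{y \<in> A. p y = p b} \<in> A // ?R"
        using f_class class_in p_fixes[OF b] by metis+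
      then show "b \<in> f ` (A // ?R)"
        by (rule image_eqI[OF sym])
    qed
  qed
  moreover have "quot_le A le C D \<longleftrightarrow> le (f C) (f D)"
    if C: "C \<in> A // ?R" and D: "D \<in> A // ?R" for C D
  proof -
    obtain c where c: "c \<in> A" "C = {y \<in> A. p y = p c}"
      using C by (rule kernel_class_cases)
    obtain d where d: "d \<in> A" "D = {y \<in> A. p y = p d}"
      using D by (rule kernel_class_cases)
    show ?thesis
    proof
      assume "quot_le A le C D"
      then obtain y m where y: "y \<in> A" "p y = p d" and m: "m \<in> A" "le m y" "p m = p c"
        unfolding quot_le_def is_meet_def c d by blast
      have "f C = p m" "f D = p y"
        using c d m(3) y(2) f_class by simp_all
      then show "le (f C) (f D)"
        using p_mono[OF m(1) y(1) m(2)] by simp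
    next
      assume "le (f C) (f D)"
      then have "is_meet A le (p c) (p d) (p c)"
        using c d p_in_A le_refl by (simp add: f_class is_meet_def)
      then show "quot_le A le C D"
        unfolding quot_le_def using c d p_in_class by blast
    qed
  qed
  ultimately show ?thesis
    unfolding bij_betw_def by blast
qed

end

subsection \<open>Inversion sets\<close>

lemma Sym_inj: "w \<in> Sym n \<Longrightarrow> w p = w q \<Longrightarrow> p = q"
  by (metis Sym_def mem_Collect_eq permutes_inj injD)

lemma Sym_in: "w \<in> Sym n \<Longrightarrow> p \<in> {1..n} \<Longrightarrow> w p \<in> {1..n}"
  unfolding Sym_def by (metis mem_Collect_eq permutes_in_image)

lemma Sym_surj: "w \<in> Sym n \<Longrightarrow> v \<in> {1..n} \<Longrightarrow> \<exists>p\<in>{1..n}. w p = v"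
  by (metis Sym_def mem_Collect_eq permutes_image imageE)

lemma Sym_eq_Suc_card_less:
  assumes w: "w \<in> Sym n" and p: "p \<in> {1..n}"
  shows "w p = Suc (card {q \<in> {1..n}. w q < w p})"
proof -
  have perm: "w permutes {1..n}"
    using w by (simp add: Sym_def)
  have "w ` {q \<in> {1..n}. w q < w p} = {v \<in> w ` {1..n}. v < w p}"
    by auto
  also have "\<dots> = {1..<w p}"
    using permutes_image[OF perm] Sym_in[OF w p] by auto
  finally have "card {q \<in> {1..n}. w q < w p} = card {1..<w p}"
    by (metis card_image permutes_inj_on[OF perm])
  then show ?thesis
    using Sym_in[OF w p] by simp
qed

definition Pairs :: "nat \<Rightarrow> (nat \<times> nat) set" where
  "Pairs n = {(i,k). 1 \<le> i \<and> i < k \<and> k \<le> n}"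

definition cotrans :: "(nat \<times> nat) set \<Rightarrow> bool" where
  "cotrans U \<longleftrightarrow> (\<forall>i j k. (i,k) \<in> U \<and> i < j \<and> j < k \<longrightarrow> (i,j) \<in> U \<or> (j,k) \<in> U)"

lemma inv_set_subset_Pairs: "inv_set n w \<subseteq> Pairs n"
  by (auto simp: inv_set_def Pairs_def)

lemma trans_inv_set: "trans (inv_set n w)"
  unfolding trans_def inv_set_def by auto

lemma cotrans_inv_set: "cotrans (inv_set n w)"
  unfolding cotrans_def inv_set_def by auto

lemma trancl_subset_Pairs: "G \<subseteq> Pairs n \<Longrightarrow> G\<^sup>+ \<subseteq> Pairs n"
proof -
  have "trans (Pairs n)"
    by (auto simp: trans_def Pairs_def)
  then show "G \<subseteq> Pairs n \<Longrightarrow> G\<^sup>+ \<subseteq> Pairs n"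
    by (metis trancl_id trancl_mono_subset)
qed

lemma cotrans_trancl:
  assumes G: "G \<subseteq> Pairs n"
    and gen: "\<And>i j k. (i,k) \<in> G \<Longrightarrow> i < j \<Longrightarrow> j < k \<Longrightarrow> (i,j) \<in> G\<^sup>+ \<or> (j,k) \<in> G\<^sup>+"
  shows "cotrans (G\<^sup>+)"
proof -
  have "\<forall>j. i < j \<and> j < k \<longrightarrow> (i,j) \<in> G\<^sup>+ \<or> (j,k) \<in> G\<^sup>+" if "(i,k) \<in> G\<^sup>+" for i k
    using that
  proof (induction rule: trancl_induct)
    case (base k)
    then show ?case using gen by blast
  next
    case (step y k)
    show ?case
    proof (intro allI impI)
      fix j assume j: "i < j \<and> j < k"
      consider "j < y" | "j = y" | "y < j" by linarith
      then show "(i,j) \<in> G\<^sup>+ \<or> (j,k) \<in> G\<^sup>+"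
      proof cases
        case 1
        have "i < y" using step.hyps(1) trancl_subset_Pairs[OF G] by (auto simp: Pairs_def)
        then show ?thesis using step 1 j by (meson trancl_into_trancl)
      next
        case 2
        then show ?thesis using step.hyps(1) by simp
      next
        case 3
        then show ?thesis using gen[OF step.hyps(2)] step.hyps(1) j by (meson trancl_trans)
      qed
    qed
  qed
  then show ?thesis
    unfolding cotrans_def by blast
qed

text \<open>\<open>realize_less U q p\<close>: the permutation with inversion set U takes a smaller value at q than at p.\<close>

definition realize_less :: "(nat \<times> nat) set \<Rightarrow> nat \<Rightarrow> nat \<Rightarrow> bool" where
  "realize_less U q p \<longleftrightarrow> (q < p \<and> (q,p) \<notin> U) \<or> (p < q \<and> (p,q) \<in> U)"

definition realize :: "nat \<Rightarrow> (nat \<times> nat) set \<Rightarrow> nat \<Rightarrow> nat" where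
  "realize n U p = (if p \<in> {1..n} then Suc (card {q \<in> {1..n}. realize_less U q p}) else p)"

lemma realize_less_trans:
  assumes "trans U" "cotrans U" "realize_less U p q" "realize_less U q r"
  shows "realize_less U p r"
proof -
  have tr: "(a,b) \<in> U \<Longrightarrow> (b,c) \<in> U \<Longrightarrow> (a,c) \<in> U" for a b c
    using assms(1) unfolding trans_def by blast
  have co: "(a,c) \<in> U \<Longrightarrow> a < b \<Longrightarrow> b < c \<Longrightarrow> (a,b) \<in> U \<or> (b,c) \<in> U" for a b c
    using assms(2) unfolding cotrans_def by blast
  consider "p < q" "(p,q) \<notin> U" "q < r" "(q,r) \<notin> U" | "p < q" "(p,q) \<notin> U" "r < q" "(r,q) \<in> U"
    | "q < p" "(q,p) \<in> U" "q < r" "(q,r) \<notin> U" | "q < p" "(q,p) \<in> U" "r < q" "(r,q) \<in> U"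
    using assms(3,4) unfolding realize_less_def by blast
  then show ?thesis
  proof cases
    case 1
    then show ?thesis using co[of p r q] unfolding realize_less_def by auto
  next
    case 2
    consider "p < r" | "r < p" | "p = r" by linarith
    then show ?thesis
      by cases (use 2 tr[of p r q] co[of r q p] in \<open>auto simp: realize_less_def\<close>)
  next
    case 3
    consider "p < r" | "r < p" | "p = r" by linarith
    then show ?thesis
      by cases (use 3 tr[of q p r] co[of q p r] in \<open>auto simp: realize_less_def\<close>)
  next
    case 4
    then show ?thesis using tr[of r q p] unfolding realize_less_def by auto
  qed
qed

lemma realize_strict_mono:
  assumes "trans U" "cotrans U" "p \<in> {1..n}" "q \<in> {1..n}" "realize_less U p q"
  shows "realize n U p < realize n U q"
proof -
  have "\<not> realize_less U p p"
    by (simp add: realize_less_def)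
  then have "{x \<in> {1..n}. realize_less U x p} \<subset> {x \<in> {1..n}. realize_less U x q}"
    using realize_less_trans[OF assms(1,2) _ assms(5)] assms(3,5) by blast
  then have "card {x \<in> {1..n}. realize_less U x p} < card {x \<in> {1..n}. realize_less U x q}"
    by (intro psubset_card_mono) simp_all
  then show ?thesis
    using assms(3,4) by (simp add: realize_def)
qed

lemma realize_in_Sym:
  assumes "trans U" "cotrans U"
  shows "realize n U \<in> Sym n"
proof -
  have inj: "inj_on (realize n U) {1..n}"
  proof (rule inj_onI, rule ccontr)
    fix p q assume "p \<in> {1..n}" "q \<in> {1..n}" "realize n U p = realize n U q" "p \<noteq> q"
    moreover have "realize_less U p q \<or> realize_less U q p"
      using \<open>p \<noteq> q\<close> by (auto simp: realize_less_def nat_neq_iff)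
    ultimately show False
      using realize_strict_mono[OF assms, of p n q] realize_strict_mono[OF assms, of q n p] by auto
  qed
  have "card {x \<in> {1..n}. realize_less U x p} \<le> card ({1..n} - {p})" if "p \<in> {1..n}" for p
    by (intro card_mono) (auto simp: realize_less_def)
  then have "realize n U ` {1..n} \<subseteq> {1..n}"
    by (force simp: realize_def)
  then have "bij_betw (realize n U) {1..n} {1..n}"
    using endo_inj_surj[OF _ _ inj] inj by (simp add: bij_betw_def)
  then have "realize n U permutes {1..n}"
    by (rule bij_imp_permutes) (auto simp: realize_def)
  then show ?thesis
    by (simp add: Sym_def)
qed

lemma inv_set_realize:
  assumes "trans U" "cotrans U" "U \<subseteq> Pairs n"
  shows "inv_set n (realize n U) = U"
proof safe
  fix i k assume ik: "(i,k) \<in> inv_set n (realize n U)"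
  show "(i,k) \<in> U"
  proof (rule ccontr)
    assume "(i,k) \<notin> U"
    then have "realize_less U i k"
      using ik by (simp add: realize_less_def inv_set_def)
    then show False
      using realize_strict_mono[OF assms(1,2), of i n k] ik by (simp add: inv_set_def)
  qed
next
  fix i k assume ik: "(i,k) \<in> U"
  then have "1 \<le> i" "i < k" "k \<le> n"
    using assms(3) by (auto simp: Pairs_def)
  moreover have "realize_less U k i"
    using ik calculation by (simp add: realize_less_def)
  ultimately show "(i,k) \<in> inv_set n (realize n U)"
    using realize_strict_mono[OF assms(1,2), of k n i] by (simp add: inv_set_def)
qed

lemma realize_inv_set:
  assumes w: "w \<in> Sym n"
  shows "realize n (inv_set n w) = w"
proof
  fix p
  show "realize n (inv_set n w) p = w p"
  proof (cases "p \<in> {1..n}")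
    case False
    then have "w p = p"
      using w by (simp add: Sym_def permutes_not_in)
    then show ?thesis
      unfolding realize_def if_not_P[OF False] by simp
  next
    case True
    have "realize_less (inv_set n w) q p \<longleftrightarrow> w q < w p" if "q \<in> {1..n}" for q
    proof (cases "q = p")
      case False
      then have "w q \<noteq> w p"
        using Sym_inj[OF w] by blast
      then show ?thesis
        using True that False by (auto simp: realize_less_def inv_set_def nat_neq_iff)
    qed (simp add: realize_less_def)
    then have "{q \<in> {1..n}. realize_less (inv_set n w) q p} = {q \<in> {1..n}. w q < w p}"
      by blast
    then show ?thesis
      using True Sym_eq_Suc_card_less[OF w True] by (simp add: realize_def)
  qed
qed

lemma weak_le_antisym:
  assumes "w \<in> Sym n" "w' \<in> Sym n" "weak_le n w w'" "weak_le n w' w"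
  shows "w = w'"
  using assms realize_inv_set unfolding weak_le_def by (metis subset_antisym)

subsection \<open>Parabolic quotients\<close>

lemma same_region_mono:
  "same_region J i k \<Longrightarrow> i \<le> p \<Longrightarrow> p \<le> q \<Longrightarrow> q \<le> k \<Longrightarrow> same_region J p q"
  unfolding same_region_def by (auto simp: min_def max_def)

lemma same_region_trans:
  assumes "same_region J i j" "same_region J j k" "i \<le> j" "j \<le> k"
  shows "same_region J i k"
  using assms unfolding same_region_def by (auto simp: min_def max_def) (metis not_less)

definition crosses_regions :: "nat set \<Rightarrow> (nat \<times> nat) set \<Rightarrow> bool" where
  "crosses_regions J U \<longleftrightarrow> (\<forall>(i,k)\<in>U. \<not> same_region J i k)"

lemma crosses_regions_trancl:
  assumes G: "G \<subseteq> Pairs n" and cr: "crosses_regions J G"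
  shows "crosses_regions J (G\<^sup>+)"
  unfolding crosses_regions_def
proof (clarify)
  fix x z assume "(x,z) \<in> G\<^sup>+" "same_region J x z"
  then consider "(x,z) \<in> G" | y where "(x,y) \<in> G" "(y,z) \<in> G\<^sup>+"
    by (meson converse_tranclE)
  then show False
  proof cases
    case 1
    then show False using cr \<open>same_region J x z\<close> by (auto simp: crosses_regions_def)
  next
    case 2
    then have "(x,y) \<in> Pairs n" "(y,z) \<in> Pairs n"
      using G trancl_subset_Pairs[OF G] by blast+
    then have "same_region J x y"
      using \<open>same_region J x z\<close> same_region_mono[of J x z x y] by (simp add: Pairs_def)
    then show False
      using 2 cr by (auto simp: crosses_regions_def)
  qed
qed

lemma SymJ_less_if_same_region:
  assumes w: "w \<in> SymJ n J" and "same_region J i k" "i < k"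
  shows "w i < w k"
  using assms(2,3)
proof (induction k)
  case (Suc k)
  have "k \<in> J"
    using Suc.prems unfolding same_region_def by auto
  then have "w k < w (Suc k)"
    using w by (simp add: SymJ_def)
  moreover have "i < k \<Longrightarrow> w i < w k"
    using Suc same_region_mono[of J i "Suc k" i k] by simp
  ultimately show ?case
    using Suc.prems(2) less_Suc_eq by auto
qed simp

lemma crosses_regions_inv_set:
  assumes "w \<in> SymJ n J"
  shows "crosses_regions J (inv_set n w)"
  unfolding crosses_regions_def
proof clarify
  fix i k assume "(i,k) \<in> inv_set n w" "same_region J i k"
  then show False
    using SymJ_less_if_same_region[OF assms, of i k] by (simp add: inv_set_def)
qed

lemma SymJ_if_crosses_regions:
  assumes w: "w \<in> Sym n" and cr: "crosses_regions J (inv_set n w)" and J: "J \<subseteq> {1..<n}"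
  shows "w \<in> SymJ n J"
proof -
  have "w i < w (Suc i)" if "i \<in> J" for i
  proof -
    have "same_region J i (Suc i)"
      unfolding same_region_def
    proof (intro allI impI)
      fix m assume "min i (Suc i) \<le> m \<and> m < max i (Suc i)"
      then have "m = i"
        by simp
      then show "m \<in> J"
        using that by simp
    qed
    then have "(i, Suc i) \<notin> inv_set n w"
      using cr unfolding crosses_regions_def by blast
    moreover have "1 \<le> i" "Suc i \<le> n"
      using J that by auto
    moreover have "w i \<noteq> w (Suc i)"
      using Sym_inj[OF w, of i "Suc i"] by auto
    ultimately show ?thesis
      by (auto simp: inv_set_def)
  qed
  then show ?thesis
    using w by (simp add: SymJ_def)
qed

lemma realize_in_SymJ:
  assumes "trans U" "cotrans U" "U \<subseteq> Pairs n" "crosses_regions J U" "J \<subseteq> {1..<n}"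
  shows "realize n U \<in> SymJ n J" "inv_set n (realize n U) = U"
proof -
  show inv: "inv_set n (realize n U) = U"
    using inv_set_realize assms(1-3) .
  show "realize n U \<in> SymJ n J"
    using SymJ_if_crosses_regions[OF realize_in_Sym[OF assms(1,2)]] inv assms(4,5) by simp
qed

lemma SymJ_lub:
  assumes F: "F \<subseteq> SymJ n J" and J: "J \<subseteq> {1..<n}"
  defines "U \<equiv> (\<Union>w\<in>F. inv_set n w)\<^sup>+"
  shows "realize n U \<in> SymJ n J" "inv_set n (realize n U) = U"
    and "w \<in> F \<Longrightarrow> weak_le n w (realize n U)"
    and "\<forall>w\<in>F. weak_le n w v \<Longrightarrow> weak_le n (realize n U) v"
proof -
  define G where "G = (\<Union>w\<in>F. inv_set n w)"
  have U: "U = G\<^sup>+"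
    by (simp add: U_def G_def)
  have G: "G \<subseteq> Pairs n"
    using inv_set_subset_Pairs unfolding G_def by blast
  have "crosses_regions J G"
    unfolding crosses_regions_def
  proof clarify
    fix i k assume "(i,k) \<in> G" "same_region J i k"
    then obtain w where "w \<in> F" "(i,k) \<in> inv_set n w"
      unfolding G_def by blast
    then show False
      using crosses_regions_inv_set[of w n J] F \<open>same_region J i k\<close>
      unfolding crosses_regions_def by blast
  qed
  moreover have "cotrans (G\<^sup>+)"
  proof (rule cotrans_trancl[OF G])
    fix i j k assume "(i,k) \<in> G" "i < j" "j < k"
    then obtain w where "w \<in> F" "(i,k) \<in> inv_set n w"
      unfolding G_def by blast
    then have "(i,j) \<in> inv_set n w \<or> (j,k) \<in> inv_set n w"
      using cotrans_inv_set[of n w] \<open>i < j\<close> \<open>j < k\<close> unfolding cotrans_def by blast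
    then show "(i,j) \<in> G\<^sup>+ \<or> (j,k) \<in> G\<^sup>+"
      using \<open>w \<in> F\<close> unfolding G_def by blast
  qed
  ultimately show inv: "inv_set n (realize n U) = U" and "realize n U \<in> SymJ n J"
    unfolding U
    using realize_in_SymJ[OF trans_trancl _ trancl_subset_Pairs[OF G] crosses_regions_trancl[OF G] J]
    by blast+
  show "w \<in> F \<Longrightarrow> weak_le n w (realize n U)"
  proof -
    assume "w \<in> F"
    then have "inv_set n w \<subseteq> G"
      unfolding G_def by blast
    then have "inv_set n w \<subseteq> G\<^sup>+"
      using trancl_incr by blast
    then show ?thesis
      unfolding weak_le_def U inv[unfolded U] .
  qed
  assume "\<forall>w\<in>F. weak_le n w v"
  then have "G \<subseteq> inv_set n v"
    unfolding G_def weak_le_def by blast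
  then have "G\<^sup>+ \<subseteq> inv_set n v"
    using trancl_mono_subset trans_inv_set trancl_id by metis
  then show "weak_le n (realize n U) v"
    unfolding weak_le_def U inv[unfolded U] .
qed

lemma is_lattice_SymJ:
  assumes J: "J \<subseteq> {1..<n}"
  shows "is_lattice (SymJ n J) (weak_le n)"
  unfolding is_lattice_def
proof (intro conjI ballI impI)
  fix x y assume xy: "x \<in> SymJ n J" "y \<in> SymJ n J"
  define F where "F = {u \<in> SymJ n J. weak_le n u x \<and> weak_le n u y}"
  have F: "F \<subseteq> SymJ n J" "{x,y} \<subseteq> SymJ n J"
    using xy by (auto simp: F_def)
  note meet = SymJ_lub[OF F(1) J] and join = SymJ_lub[OF F(2) J]
  have "is_meet (SymJ n J) (weak_le n) x y (realize n ((\<Union>w\<in>F. inv_set n w)\<^sup>+))"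
    unfolding is_meet_def
  proof (intro conjI ballI impI)
    show "weak_le n (realize n ((\<Union>w\<in>F. inv_set n w)\<^sup>+)) x"
      "weak_le n (realize n ((\<Union>w\<in>F. inv_set n w)\<^sup>+)) y"
      using meet(4) by (auto simp: F_def)
    show "weak_le n z (realize n ((\<Union>w\<in>F. inv_set n w)\<^sup>+))"
      if "z \<in> SymJ n J" "weak_le n z x \<and> weak_le n z y" for z
      using meet(3) that by (simp add: F_def)
  qed (rule meet(1))
  then show "\<exists>m. is_meet (SymJ n J) (weak_le n) x y m"
    by blast
  have "is_join (SymJ n J) (weak_le n) x y (realize n ((\<Union>w\<in>{x,y}. inv_set n w)\<^sup>+))"
    unfolding is_join_def using join by simp
  then show "\<exists>m. is_join (SymJ n J) (weak_le n) x y m"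
    by blast
next
  fix x y assume "x \<in> SymJ n J" "y \<in> SymJ n J" "weak_le n x y \<and> weak_le n y x"
  then show "x = y"
    using weak_le_antisym by (auto simp: SymJ_def)
qed (auto simp: weak_le_def)

lemma inv_set_join:
  assumes J: "J \<subseteq> {1..<n}" and xz: "x \<in> SymJ n J" "z \<in> SymJ n J"
    and m: "is_join (SymJ n J) (weak_le n) x z m"
  shows "inv_set n m = (inv_set n x \<union> inv_set n z)\<^sup>+"
proof -
  let ?U = "(\<Union>w\<in>{x,z}. inv_set n w)\<^sup>+"
  have F: "{x,z} \<subseteq> SymJ n J"
    using xz by simp
  have "weak_le n m (realize n ?U)"
    using m SymJ_lub(1,3)[OF F J] unfolding is_join_def by blast
  moreover have "weak_le n (realize n ?U) m"
    using m SymJ_lub(4)[OF F J, of m] unfolding is_join_def by blast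
  ultimately show ?thesis
    using SymJ_lub(2)[OF F J] by (simp add: weak_le_def)
qed

subsection \<open>The projection onto 231-avoiding elements\<close>

definition inverted_up_to :: "nat set \<Rightarrow> (nat \<times> nat) set \<Rightarrow> nat \<Rightarrow> nat \<Rightarrow> bool" where
  "inverted_up_to J T i m \<longleftrightarrow> (\<forall>q. i < q \<and> q \<le> m \<and> \<not> same_region J i q \<longrightarrow> (i,q) \<in> T)"

definition prefix_inversions :: "nat set \<Rightarrow> (nat \<times> nat) set \<Rightarrow> (nat \<times> nat) set" where
  "prefix_inversions J T = {(i,m). i < m \<and> \<not> same_region J i m \<and> inverted_up_to J T i m}"

definition proj231 :: "nat \<Rightarrow> nat set \<Rightarrow> (nat \<Rightarrow> nat) \<Rightarrow> (nat \<Rightarrow> nat)" where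
  "proj231 n J w = realize n ((prefix_inversions J (inv_set n w))\<^sup>+)"

lemma prefix_inversions_subset: "prefix_inversions J T \<subseteq> T"
  by (auto simp: prefix_inversions_def inverted_up_to_def)

lemma prefix_inversions_mono: "T \<subseteq> T' \<Longrightarrow> prefix_inversions J T \<subseteq> prefix_inversions J T'"
  by (auto simp: prefix_inversions_def inverted_up_to_def)

lemma inverted_up_to_Suc:
  "inverted_up_to J T i (Suc k) \<longleftrightarrow>
     inverted_up_to J T i k \<and> (i < Suc k \<and> \<not> same_region J i (Suc k) \<longrightarrow> (i, Suc k) \<in> T)"
  unfolding inverted_up_to_def using le_Suc_eq by auto

lemma prefix_inversions_split:
  assumes w: "w \<in> SymJ n J" and im: "(i,m) \<in> prefix_inversions J (inv_set n w)"
    and j: "i < j" "j < m"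
  shows "(i,j) \<in> prefix_inversions J (inv_set n w) \<or> (j,m) \<in> prefix_inversions J (inv_set n w)"
proof (cases "same_region J i j")
  case False
  then show ?thesis
    using im j by (auto simp: prefix_inversions_def inverted_up_to_def)
next
  case True
  text \<open>Then w i < w j, so every crossing inversion (i,q) with q > j is also one of j.\<close>
  have "(j,q) \<in> inv_set n w" if q: "j < q" "q \<le> m" "\<not> same_region J j q" for q
  proof -
    have "\<not> same_region J i q"
      using same_region_mono[of J i q j q] q j by auto
    then have "(i,q) \<in> inv_set n w"
      using im q j by (auto simp: prefix_inversions_def inverted_up_to_def)
    then show ?thesis
      using SymJ_less_if_same_region[OF w True j(1)] q j by (auto simp: inv_set_def)
  qed
  moreover have "\<not> same_region J j m"
    using im True same_region_trans[of J i j m] j by (auto simp: prefix_inversions_def)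
  ultimately show ?thesis
    using j by (auto simp: prefix_inversions_def inverted_up_to_def)
qed

lemma trancl_prefix_inversions_subset: "(prefix_inversions J (inv_set n w))\<^sup>+ \<subseteq> inv_set n w"
  using trancl_mono_subset[OF prefix_inversions_subset] trans_inv_set by (metis trancl_id)

lemma proj231_in_SymJ:
  assumes w: "w \<in> SymJ n J" and J: "J \<subseteq> {1..<n}"
  shows "proj231 n J w \<in> SymJ n J"
    and inv_set_proj231: "inv_set n (proj231 n J w) = (prefix_inversions J (inv_set n w))\<^sup>+"
proof -
  let ?G = "prefix_inversions J (inv_set n w)"
  have G: "?G \<subseteq> Pairs n"
    using prefix_inversions_subset inv_set_subset_Pairs by blast
  note sub = trancl_prefix_inversions_subset[of J n w]
  have "cotrans (?G\<^sup>+)"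
    using cotrans_trancl[OF G] prefix_inversions_split[OF w] by blast
  moreover have "crosses_regions J (?G\<^sup>+)"
    using crosses_regions_inv_set[OF w] sub by (auto simp: crosses_regions_def)
  ultimately show "proj231 n J w \<in> SymJ n J" "inv_set n (proj231 n J w) = ?G\<^sup>+"
    using realize_in_SymJ[OF trans_trancl _ trancl_subset_Pairs[OF G] _ J] by (simp_all add: proj231_def)
qed

lemma proj231_avoids231:
  assumes w: "w \<in> SymJ n J" and J: "J \<subseteq> {1..<n}"
  shows "avoids231 n J (proj231 n J w)"
  unfolding avoids231_def
proof (intro notI, elim exE conjE)
  let ?a = "proj231 n J w" and ?G = "prefix_inversions J (inv_set n w)"
  fix i j k
  assume h: "1 \<le> i" "i < j" "j < k" "k \<le> n" "\<not> same_region J i j" "\<not> same_region J j k"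
    "\<not> same_region J i k" "?a k < ?a i" "?a i < ?a j" "?a i = ?a k + 1"
  have inv: "inv_set n ?a = ?G\<^sup>+"
    using inv_set_proj231[OF w J] .
  have "(i,k) \<in> inv_set n ?a"
    using h by (simp add: inv_set_def)
  then have "(i,k) \<in> ?G\<^sup>+"
    unfolding inv .
  then consider "(i,k) \<in> ?G" | p where "(i,p) \<in> ?G" "(p,k) \<in> ?G\<^sup>+"
    by (meson converse_tranclE)
  then show False
  proof cases
    case 1
    then have "(i,j) \<in> ?G"
      using h(2,3,5) by (auto simp: prefix_inversions_def inverted_up_to_def)
    then have "(i,j) \<in> inv_set n ?a"
      unfolding inv by (rule r_into_trancl)
    then show False
      using h(9) by (simp add: inv_set_def)
  next
    case 2
    text \<open>A two-step path from i to k needs a value strictly between \<open>?a k\<close> and \<open>?a i = ?a k + 1\<close>.\<close>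
    then have "(i,p) \<in> inv_set n ?a" "(p,k) \<in> inv_set n ?a"
      unfolding inv by auto
    then show False
      using h(10) by (simp add: inv_set_def)
  qed
qed

lemma not_avoids231_if_uninverted_crossing:
  assumes b: "b \<in> SymJ n J"
    and ik: "1 \<le> i" "g < k" "k \<le> n" "b k < b i"
    and g: "i < g" "\<not> same_region J i g" "b i < b g"
    and gap: "\<And>m. i < m \<Longrightarrow> m < k \<Longrightarrow> \<not> (b k < b m \<and> b m < b i)"
  shows "\<not> avoids231 n J b"
proof -
  have bS: "b \<in> Sym n"
    using b by (simp add: SymJ_def)
  define K where "K = {k' \<in> {1..n}. g < k' \<and> b k \<le> b k' \<and> b k' < b i}"
  have "k \<in> K"
    using ik g by (simp add: K_def)
  then obtain k' where k': "k' \<in> K" and k'_max: "\<And>x. x \<in> K \<Longrightarrow> b x \<le> b k'"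
    using Lattices_Big.ex_has_greatest_nat[of "\<lambda>x. x \<in> K" k b "b i"] unfolding K_def by blast
  have k'_props: "1 \<le> k'" "k' \<le> n" "g < k'" "b k \<le> b k'" "b k' < b i"
    using k' by (simp_all add: K_def)
  text \<open>k' carries the largest value in [b k, b i) right of g; with i' carrying \<open>b k' + 1\<close>,
    the positions i', g, k' form the 231 pattern.\<close>
  have "b i \<in> {1..n}"
    using Sym_in[OF bS] ik g by simp
  then obtain i' where i': "i' \<in> {1..n}" "b i' = b k' + 1"
    using Sym_surj[OF bS, of "b k' + 1"] k'_props by auto
  have i'_le: "b i' \<le> b i"
    using i' k'_props by simp
  have "i' < g"
  proof (rule ccontr)
    assume "\<not> i' < g"
    moreover have "i' \<noteq> g"
      using i'_le g by auto
    ultimately have "g < i'" "i' \<noteq> i"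
      using g by auto
    then have "b i' < b i"
      using i'_le Sym_inj[OF bS, of i' i] by fastforce
    then have "i' \<in> K"
      using i' \<open>g < i'\<close> k'_props by (simp add: K_def)
    then show False
      using k'_max i' by fastforce
  qed
  have "\<not> same_region J i' g"
  proof (cases "i' = i")
    case False
    then have "b i' < b i"
      using i'_le Sym_inj[OF bS, of i' i] by fastforce
    moreover have "b k < b i'"
      using i' k'_props by simp
    ultimately have "\<not> (i < i' \<and> i' < k)"
      using gap by blast
    then have "i' < i"
      using \<open>i' < g\<close> ik False by linarith
    then show ?thesis
      using g same_region_mono[of J i' g i g] by auto
  qed (use g in simp)
  moreover have "\<not> same_region J g k'"
    using SymJ_less_if_same_region[OF b, of g k'] k'_props g by auto
  moreover have "\<not> same_region J i' k'"
    using SymJ_less_if_same_region[OF b, of i' k'] \<open>i' < g\<close> k'_props i' by auto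
  moreover have "1 \<le> i'" "k' \<le> n" "b k' < b i'" "b i' < b g"
    using i' k'_props i'_le g by auto
  ultimately show ?thesis
    unfolding avoids231_def using \<open>i' < g\<close> k'_props(3) i'(2) by blast
qed

lemma inv_set_subset_trancl_prefix_inversions:
  assumes b: "b \<in> SymJ231 n J"
  shows "inv_set n b \<subseteq> (prefix_inversions J (inv_set n b))\<^sup>+"
proof safe
  let ?T = "inv_set n b"
  have bJ: "b \<in> SymJ n J" and av: "avoids231 n J b" and bS: "b \<in> Sym n"
    using b by (auto simp: SymJ231_def SymJ_def)
  fix i k assume "(i,k) \<in> ?T"
  text \<open>An inversion (i,k) is a prefix inversion, or factors through a position with value between
    \<open>b k\<close> and \<open>b i\<close>, or else yields a 231 pattern.\<close>
  then show "(i,k) \<in> (prefix_inversions J ?T)\<^sup>+"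
  proof (induction "k - i" arbitrary: i k rule: less_induct)
    case less
    have ik: "1 \<le> i" "i < k" "k \<le> n" "b k < b i"
      using less.prems by (auto simp: inv_set_def)
    consider (run) "inverted_up_to J ?T i k"
      | (split) m where "i < m" "m < k" "b k < b m" "b m < b i"
      | (gap) "\<not> inverted_up_to J ?T i k" "\<And>m. i < m \<Longrightarrow> m < k \<Longrightarrow> \<not> (b k < b m \<and> b m < b i)"
      by blast
    then show ?case
    proof cases
      case run
      then have "(i,k) \<in> prefix_inversions J ?T"
        using ik crosses_regions_inv_set[OF bJ] less.prems
        by (auto simp: prefix_inversions_def crosses_regions_def)
      then show ?thesis ..
    next
      case split
      then have "(i,m) \<in> (prefix_inversions J ?T)\<^sup>+" "(m,k) \<in> (prefix_inversions J ?T)\<^sup>+"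
        using less.hyps[of m i] less.hyps[of k m] ik by (auto simp: inv_set_def)
      then show ?thesis
        by (rule trancl_trans)
    next
      case gap
      note no_value_between = gap(2)
      from gap obtain g where g: "i < g" "g \<le> k" "\<not> same_region J i g" "(i,g) \<notin> ?T"
        unfolding inverted_up_to_def by blast
      then have "g \<noteq> k"
        using less.prems by blast
      then have "g < k"
        using g(2) by simp
      have "b i \<noteq> b g"
        using Sym_inj[OF bS, of i g] g(1) by auto
      then have "b i < b g"
        using g(1,4) \<open>g < k\<close> ik by (auto simp: inv_set_def)
      then show ?thesis
        using not_avoids231_if_uninverted_crossing[OF bJ ik(1) \<open>g < k\<close> ik(3,4) g(1,3)]
          no_value_between av by blast
    qed
  qed
qed

lemma proj231_greatest:
  assumes w: "w \<in> SymJ n J" and J: "J \<subseteq> {1..<n}"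
  shows "proj231 n J w \<in> SymJ231 n J" "weak_le n (proj231 n J w) w"
    and "v \<in> SymJ231 n J \<Longrightarrow> weak_le n v w \<Longrightarrow> weak_le n v (proj231 n J w)"
proof -
  show "proj231 n J w \<in> SymJ231 n J" "weak_le n (proj231 n J w) w"
    using proj231_in_SymJ[OF w J] trancl_prefix_inversions_subset proj231_avoids231[OF w J]
    by (simp_all add: SymJ231_def weak_le_def)
  assume v: "v \<in> SymJ231 n J" "weak_le n v w"
  have "inv_set n v \<subseteq> (prefix_inversions J (inv_set n v))\<^sup>+"
    using inv_set_subset_trancl_prefix_inversions[OF v(1)] .
  also have "\<dots> \<subseteq> (prefix_inversions J (inv_set n w))\<^sup>+"
    using v(2) by (intro trancl_mono_subset prefix_inversions_mono) (simp add: weak_le_def)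
  finally show "weak_le n v (proj231 n J w)"
    using inv_set_proj231[OF w J] by (simp add: weak_le_def)
qed

lemma Pi_down_eq_proj231:
  assumes w: "w \<in> SymJ n J" and J: "J \<subseteq> {1..<n}"
  shows "Pi_down n J w = proj231 n J w"
  unfolding Pi_down_def
proof (rule the_equality)
  show "proj231 n J w \<in> SymJ231 n J \<and> weak_le n (proj231 n J w) w \<and>
      (\<forall>v\<in>SymJ231 n J. weak_le n v w \<longrightarrow> weak_le n v (proj231 n J w))"
    using proj231_greatest[OF w J] by blast
  fix u
  assume u: "u \<in> SymJ231 n J \<and> weak_le n u w \<and> (\<forall>v\<in>SymJ231 n J. weak_le n v w \<longrightarrow> weak_le n v u)"
  have "weak_le n u (proj231 n J w)" "weak_le n (proj231 n J w) u"
    using u proj231_greatest[OF w J] by blast+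
  moreover have "u \<in> Sym n" "proj231 n J w \<in> Sym n"
    using u proj231_greatest(1)[OF w J] by (simp_all add: SymJ231_def SymJ_def)
  ultimately show "u = proj231 n J w"
    using weak_le_antisym by blast
qed

lemma down_projection_Pi_down:
  assumes J: "J \<subseteq> {1..<n}"
  shows "down_projection (SymJ n J) (weak_le n) (SymJ231 n J) (Pi_down n J)"
proof
  show "SymJ231 n J \<subseteq> SymJ n J"
    by (auto simp: SymJ231_def)
  fix x y z w b
  show "weak_le n x x" "weak_le n x y \<Longrightarrow> weak_le n y z \<Longrightarrow> weak_le n x z"
    by (auto simp: weak_le_def)
  show "x \<in> SymJ n J \<Longrightarrow> y \<in> SymJ n J \<Longrightarrow> weak_le n x y \<Longrightarrow> weak_le n y x \<Longrightarrow> x = y"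
    using weak_le_antisym[of x n y] by (simp add: SymJ_def)
  assume "w \<in> SymJ n J"
  then show "Pi_down n J w \<in> SymJ231 n J" "weak_le n (Pi_down n J w) w"
    "b \<in> SymJ231 n J \<Longrightarrow> weak_le n b w \<Longrightarrow> weak_le n b (Pi_down n J w)"
    using proj231_greatest[OF _ J] Pi_down_eq_proj231[OF _ J] by simp_all
qed

lemma prefix_inversions_proj231:
  assumes w: "w \<in> SymJ n J" and J: "J \<subseteq> {1..<n}"
  shows "prefix_inversions J (inv_set n (proj231 n J w)) = prefix_inversions J (inv_set n w)"
proof
  let ?G = "prefix_inversions J (inv_set n w)"
  show "prefix_inversions J (inv_set n (proj231 n J w)) \<subseteq> ?G"
    using prefix_inversions_mono[OF trancl_prefix_inversions_subset] inv_set_proj231[OF w J] by simp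
  show "?G \<subseteq> prefix_inversions J (inv_set n (proj231 n J w))"
    unfolding inv_set_proj231[OF w J] by (auto simp: prefix_inversions_def inverted_up_to_def)
qed

lemma Pi_down_eq_iff:
  assumes x: "x \<in> SymJ n J" and y: "y \<in> SymJ n J" and J: "J \<subseteq> {1..<n}"
  shows "Pi_down n J x = Pi_down n J y \<longleftrightarrow>
    prefix_inversions J (inv_set n x) = prefix_inversions J (inv_set n y)"
  using Pi_down_eq_proj231[OF x J] Pi_down_eq_proj231[OF y J]
    prefix_inversions_proj231[OF x J] prefix_inversions_proj231[OF y J]
  by (metis proj231_def)

lemma prefix_inversion_if_no_later_inversion:
  assumes w: "w \<in> SymJ n J" and pm: "(p,m) \<in> inv_set n w"
    and later: "\<And>q. p < q \<Longrightarrow> q < m \<Longrightarrow> \<not> same_region J p q \<Longrightarrow> (q,m) \<notin> inv_set n w"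
  shows "(p,m) \<in> prefix_inversions J (inv_set n w)"
proof -
  have "(p,q) \<in> inv_set n w" if q: "p < q" "q \<le> m" "\<not> same_region J p q" for q
  proof (cases "q = m")
    case False
    then have "(q,m) \<notin> inv_set n w"
      using q later by simp
    then show ?thesis
      using cotrans_inv_set[of n w] pm q False unfolding cotrans_def by (meson le_neq_trans)
  qed (use pm in simp)
  moreover have "p < m" "\<not> same_region J p m"
    using pm crosses_regions_inv_set[OF w] by (auto simp: inv_set_def crosses_regions_def)
  ultimately show ?thesis
    by (auto simp: prefix_inversions_def inverted_up_to_def)
qed

lemma trancl_union_prefix_inversion:
  assumes x: "x \<in> SymJ n J" and z: "z \<in> SymJ n J"
    and im: "(i,m) \<in> (inv_set n x \<union> inv_set n z)\<^sup>+"
  shows "\<exists>p. (p = i \<or> (i < p \<and> p < m \<and> \<not> same_region J i p)) \<and>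
    (p,m) \<in> prefix_inversions J (inv_set n x) \<union> prefix_inversions J (inv_set n z)"
proof -
  let ?G = "inv_set n x \<union> inv_set n z"
  have G: "?G \<subseteq> Pairs n"
    using inv_set_subset_Pairs by blast
  have "crosses_regions J ?G"
    using crosses_regions_inv_set[OF x] crosses_regions_inv_set[OF z]
    unfolding crosses_regions_def by blast
  then have cr: "crosses_regions J (?G\<^sup>+)"
    by (rule crosses_regions_trancl[OF G])
  text \<open>Candidates for the last step (p,m) of a path from i to m; the largest one is a prefix inversion.\<close>
  define Cs where "Cs = {p. p < m \<and> (p = i \<or> (i < p \<and> \<not> same_region J i p)) \<and> (p,m) \<in> ?G}"
  have "Cs \<noteq> {}"
    using im
  proof (cases rule: tranclE)
    case base
    then show ?thesis
      using G by (auto simp: Cs_def Pairs_def)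
  next
    case (step p)
    then have "i < p" "p < m" "\<not> same_region J i p"
      using G trancl_subset_Pairs[OF G] cr by (auto simp: Pairs_def crosses_regions_def)
    then show ?thesis
      using step(2) by (auto simp: Cs_def)
  qed
  moreover have "finite Cs"
    by (rule finite_subset[of _ "{..<m}"]) (auto simp: Cs_def)
  ultimately obtain p where p: "p \<in> Cs" and p_max: "\<And>q. q \<in> Cs \<Longrightarrow> q \<le> p"
    using Max_in Max_ge by metis
  obtain w where w: "w \<in> {x,z}" "(p,m) \<in> inv_set n w"
    using p by (auto simp: Cs_def)
  have "(q,m) \<notin> inv_set n w" if q: "p < q" "q < m" "\<not> same_region J p q" for q
  proof
    assume "(q,m) \<in> inv_set n w"
    moreover have "i < q" "\<not> same_region J i q"
      using p q same_region_mono[of J i q i p] by (auto simp: Cs_def)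
    ultimately have "q \<in> Cs"
      using q w(1) by (auto simp: Cs_def)
    then show False
      using p_max q by fastforce
  qed
  then have "(p,m) \<in> prefix_inversions J (inv_set n w)"
    using prefix_inversion_if_no_later_inversion[of w n J p m] w x z by blast
  then show ?thesis
    using p w(1) by (auto simp: Cs_def)
qed

lemma trancl_union_iff_prefix_inversion:
  assumes x: "x \<in> SymJ n J" and z: "z \<in> SymJ n J"
    and below: "\<And>q. i < q \<Longrightarrow> q < m \<Longrightarrow> \<not> same_region J i q \<Longrightarrow> (i,q) \<in> (inv_set n x \<union> inv_set n z)\<^sup>+"
  shows "(i,m) \<in> (inv_set n x \<union> inv_set n z)\<^sup>+ \<longleftrightarrow>
    (\<exists>p. (p = i \<or> (i < p \<and> p < m \<and> \<not> same_region J i p)) \<and>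
      (p,m) \<in> prefix_inversions J (inv_set n x) \<union> prefix_inversions J (inv_set n z))"
proof
  assume "\<exists>p. (p = i \<or> (i < p \<and> p < m \<and> \<not> same_region J i p)) \<and>
      (p,m) \<in> prefix_inversions J (inv_set n x) \<union> prefix_inversions J (inv_set n z)"
  then obtain p where p: "p = i \<or> (i < p \<and> p < m \<and> \<not> same_region J i p)"
    and "(p,m) \<in> prefix_inversions J (inv_set n x) \<union> prefix_inversions J (inv_set n z)"
    by blast
  then have pm: "(p,m) \<in> (inv_set n x \<union> inv_set n z)\<^sup>+"
    using prefix_inversions_subset by blast
  show "(i,m) \<in> (inv_set n x \<union> inv_set n z)\<^sup>+"
    using p pm below trancl_trans by metis
qed (rule trancl_union_prefix_inversion[OF x z])

lemma join_prefix_inversions_cong: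
  assumes x: "x \<in> SymJ n J" and y: "y \<in> SymJ n J" and z: "z \<in> SymJ n J"
    and eq: "prefix_inversions J (inv_set n x) = prefix_inversions J (inv_set n y)"
  shows "prefix_inversions J ((inv_set n x \<union> inv_set n z)\<^sup>+) =
    prefix_inversions J ((inv_set n y \<union> inv_set n z)\<^sup>+)"
proof -
  let ?Ux = "(inv_set n x \<union> inv_set n z)\<^sup>+" and ?Uy = "(inv_set n y \<union> inv_set n z)\<^sup>+"
  have "inverted_up_to J ?Ux i k \<longleftrightarrow> inverted_up_to J ?Uy i k" for i k
  proof (induction k)
    case 0
    then show ?case
      by (simp add: inverted_up_to_def)
  next
    case (Suc k)
    have "(i, Suc k) \<in> ?Ux \<longleftrightarrow> (i, Suc k) \<in> ?Uy"
      if "inverted_up_to J ?Ux i k" "inverted_up_to J ?Uy i k"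
      using that trancl_union_iff_prefix_inversion[OF x z, of i "Suc k"]
        trancl_union_iff_prefix_inversion[OF y z, of i "Suc k"] eq
      by (simp add: inverted_up_to_def less_Suc_eq_le)
    then show ?case
      using Suc.IH inverted_up_to_Suc by metis
  qed
  then show ?thesis
    by (simp add: prefix_inversions_def)
qed

lemma Theta_eq_kernel_on: "Theta n J = kernel_on (SymJ n J) (Pi_down n J)"
  by (auto simp: Theta_def kernel_on_def)

lemma lattice_congruence_Theta:
  assumes J: "J \<subseteq> {1..<n}"
  shows "lattice_congruence (SymJ n J) (weak_le n) (Theta n J)"
  unfolding lattice_congruence_def Theta_eq_kernel_on
proof (intro conjI allI impI)
  interpret down_projection "SymJ n J" "weak_le n" "SymJ231 n J" "Pi_down n J"
    by (rule down_projection_Pi_down[OF J])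
  show "equiv (SymJ n J) (kernel_on (SymJ n J) (Pi_down n J))"
    by (rule equiv_kernel_on)
  fix x y z m m'
  assume "(x,y) \<in> kernel_on (SymJ n J) (Pi_down n J) \<and> z \<in> SymJ n J \<and>
    is_meet (SymJ n J) (weak_le n) x z m \<and> is_meet (SymJ n J) (weak_le n) y z m'"
  then show "(m,m') \<in> kernel_on (SymJ n J) (Pi_down n J)"
    using kernel_meet_compatible by blast
next
  fix x y z m m'
  assume h: "(x,y) \<in> kernel_on (SymJ n J) (Pi_down n J) \<and> z \<in> SymJ n J \<and>
    is_join (SymJ n J) (weak_le n) x z m \<and> is_join (SymJ n J) (weak_le n) y z m'"
  then have x: "x \<in> SymJ n J" and y: "y \<in> SymJ n J" and z: "z \<in> SymJ n J"
    and m: "m \<in> SymJ n J" "m' \<in> SymJ n J"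
    by (auto simp: kernel_on_def is_join_def)
  have "prefix_inversions J (inv_set n x) = prefix_inversions J (inv_set n y)"
    using h Pi_down_eq_iff[OF x y J] by (simp add: kernel_on_def)
  then have "prefix_inversions J (inv_set n m) = prefix_inversions J (inv_set n m')"
    using join_prefix_inversions_cong[OF x y z] inv_set_join[OF J x z] inv_set_join[OF J y z] h
    by simp
  then show "(m,m') \<in> kernel_on (SymJ n J) (Pi_down n J)"
    using Pi_down_eq_iff[OF m J] m by (simp add: kernel_on_def)
qed

theorem proposition3p18:
  fixes n :: nat and J :: "nat set"
  assumes "J \<subseteq> {1..<n}"
  shows "is_lattice (SymJ n J) (weak_le n) \<and> lattice_congruence (SymJ n J) (weak_le n) (Theta n J)
    \<and> (\<exists>f. bij_betw f (SymJ n J // Theta n J) (SymJ231 n J) \<and>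
         (\<forall>C\<in>SymJ n J // Theta n J. \<forall>D\<in>SymJ n J // Theta n J.
            quot_le (SymJ n J) (weak_le n) C D \<longleftrightarrow> weak_le n (f C) (f D)))"
  using is_lattice_SymJ[OF assms] lattice_congruence_Theta[OF assms]
    down_projection.quotient_iso[OF down_projection_Pi_down[OF assms]]
  unfolding Theta_eq_kernel_on by blast

end
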